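(* Let $k-1\le r\le 2k-2$ and suppose the $x$-direction parameters $(\alpha^x_s)_{s=1}^k$, $(a^x_s)_{s=0}^k$ satisfy the one-dimensional $k$-$r$-order orthogonality condition. Put $A^x_s=a^x_s-a^x_{s-1}$, $s=1,\dots,k$. Then the $k$-point quadrature rule with nodes $\alpha^x_1,\dots,\alpha^x_k$ and weights $A^x_1,\dots,A^x_k$ is exact on $P^{r+1}([-1,1])$: $$\int_{-1}^1 g(x)\,dx=\sum_{s=1}^k A^x_s\,g(\alpha^x_s)\qquad\forall g\in P^{r+1}([-1,1]).$$ The same holds in the $y$-direction with $A^y_t=a^y_t-a^y_{t-1}$ and nodes $\alpha^y_t$ when the $y$-direction parameters satisfy the condition.
   Context: $k\ge1$ an integer, $P^m([-1,1])$ the polynomials of degree $\le m$. Dual parameters $-1<\alpha^x_1<\dots<\alpha^x_k<1$; interpolation parameters $-1=a^x_0<a^x_1<\dots<a^x_k=1$ with $a^x_{s-1}<\alpha^x_s<a^x_s$; put $\alpha^x_0=-1$, $\alpha^x_{k+1}=1$ (analogously in $y$). For $k-1\le r\le 2k-2$, the $x$-direction parameters satisfy the one-dimensional $k$-$r$-order orthogonality condition if $\int_{-1}^1 g(\hat x)\big(w(\hat x)-(\hat\Pi_xw)(\hat x)\big)d\hat x=0$ for all $g\in P^r([-1,1])$ and all $w\in P^1([-1,1])$, where $(\hat\Pi_xw)(\hat x)=w(a^x_s)$ for $\hat x\in(\alpha^x_s,\alpha^x_{s+1})$, $0\le s\le k$. *)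

theory Defs
  imports "HOL-Analysis.Analysis" "HOL-Computational_Algebra.Polynomial"
begin

definition ext_alpha :: "nat \<Rightarrow> (nat \<Rightarrow> real) \<Rightarrow> nat \<Rightarrow> real" where
  "ext_alpha k \<alpha> s = (if s = 0 then -1 else if s = k + 1 then 1 else \<alpha> s)"

text \<open>The piecewise constant interpolant: (Pi w)(x) = w(a_s) for x in (alpha_s, alpha_(s+1)),
  0 <= s <= k (value 0 at the finitely many breakpoints, a null set).\<close>
definition Pi_interp :: "nat \<Rightarrow> (nat \<Rightarrow> real) \<Rightarrow> (nat \<Rightarrow> real) \<Rightarrow> (real \<Rightarrow> real) \<Rightarrow> real \<Rightarrow> real" where
  "Pi_interp k \<alpha> a w x =
     (\<Sum>s\<le>k. if ext_alpha k \<alpha> s < x \<and> x < ext_alpha k \<alpha> (Suc s) then w (a s) else 0)"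

definition orth_condition :: "nat \<Rightarrow> nat \<Rightarrow> (nat \<Rightarrow> real) \<Rightarrow> (nat \<Rightarrow> real) \<Rightarrow> bool" where
  "orth_condition k r \<alpha> a \<longleftrightarrow>
     (\<forall>g w :: real poly. degree g \<le> r \<longrightarrow> degree w \<le> 1 \<longrightarrow>
        integral {-1..1} (\<lambda>x. poly g x * (poly w x - Pi_interp k \<alpha> a (poly w) x)) = 0)"

end

theory Submission
  imports Defs
begin

text \<open>Test the orthogonality condition with \<open>g = h'\<close> and \<open>w(x) = x\<close>. On the cell
  \<open>(\<alpha>\<^sub>s, \<alpha>\<^sub>s\<^sub>+\<^sub>1)\<close> the interpolant of \<open>w\<close> is the constant \<open>a\<^sub>s\<close>, so
  \<open>h'(x)(x - \<Pi>w(x)) + h(x)\<close> is the derivative of \<open>h(x)(x - a\<^sub>s)\<close> there. Integrating cell by cell,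
  the boundary terms telescope (using \<open>a\<^sub>0 = -1\<close>, \<open>a\<^sub>k = 1\<close>) to \<open>\<Sum>\<^sub>s (a\<^sub>s - a\<^sub>s\<^sub>-\<^sub>1) h(\<alpha>\<^sub>s)\<close>,
  while the orthogonality condition says that the \<open>h'(x)(x - \<Pi>w(x))\<close> part integrates to zero.
  Since \<open>deg h' \<le> r\<close> whenever \<open>deg h \<le> r + 1\<close>, the quadrature rule is exact on \<open>P\<^sup>r\<^sup>+\<^sup>1\<close>.
  Only the ordering of the \<open>\<alpha>\<^sub>s\<close> in \<open>(-1, 1)\<close> and \<open>a\<^sub>0 = -1\<close>, \<open>a\<^sub>k = 1\<close> are used.\<close>

lemma has_integral_partition_sum:
  fixes f :: "real \<Rightarrow> 'b::banach"
  assumes "\<And>s. s < n \<Longrightarrow> e s \<le> e (Suc s)"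
    and "\<And>s. s < n \<Longrightarrow> (f has_integral I s) {e s..e (Suc s)}"
  shows "(f has_integral (\<Sum>s<n. I s)) {e 0..e n}"
  using assms
proof (induction n)
  case 0
  show ?case by auto
next
  case (Suc n)
  have "e 0 \<le> e n"
    by (rule lift_Suc_mono_le_ivl[where N = "{..<n}"]) (use Suc.prems(1) in auto)
  moreover have "(f has_integral (\<Sum>s<n. I s)) {e 0..e n}"
    by (rule Suc.IH) (use Suc.prems in auto)
  ultimately have "(f has_integral (\<Sum>s<n. I s) + I n) {e 0..e (Suc n)}"
    using Suc.prems by (intro has_integral_combine[of "e 0" "e n" "e (Suc n)"]) auto
  then show ?case by simp
qed

lemma has_integral_pderiv_mult_linear:
  fixes h :: "real poly"
  assumes "c \<le> d"
    and "\<And>x. c < x \<Longrightarrow> x < d \<Longrightarrow> f x = poly (pderiv h) x * (x - b) + poly h x"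
  shows "(f has_integral (poly h d * (d - b) - poly h c * (c - b))) {c..d}"
proof -
  have "(f has_integral ((\<lambda>x. poly h x * (x - b)) d - (\<lambda>x. poly h x * (x - b)) c)) {c..d}"
  proof (rule fundamental_theorem_of_calculus_interior)
    fix x assume x: "x \<in> {c<..<d}"
    have "((\<lambda>x. poly h x * (x - b)) has_real_derivative
            poly (pderiv h) x * (x - b) + poly h x * 1) (at x)"
      by (intro derivative_eq_intros poly_DERIV) auto
    then show "((\<lambda>x. poly h x * (x - b)) has_vector_derivative f x) (at x)"
      using assms(2) x by (simp add: has_real_derivative_iff_has_vector_derivative)
  next
    show "continuous_on {c..d} (\<lambda>x. poly h x * (x - b))"
      by (intro continuous_intros)
  qed (use assms(1) in simp)
  then show ?thesis by simp
qed

lemma sum_boundary_terms_telescope: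
  fixes q :: "real \<Rightarrow> real" and e a :: "nat \<Rightarrow> real"
  assumes "e 0 = a 0" and "e (Suc k) = a k"
  shows "(\<Sum>s\<le>k. q (e (Suc s)) * (e (Suc s) - a s) - q (e s) * (e s - a s))
       = (\<Sum>s = 1..k. (a s - a (s - 1)) * q (e s))"
proof -
  have right: "(\<Sum>s\<le>k. q (e (Suc s)) * (e (Suc s) - a s))
      = (\<Sum>s = 1..k. q (e s) * (e s - a (s - 1)))"
  proof -
    have "(\<Sum>s\<le>k. q (e (Suc s)) * (e (Suc s) - a s))
        = (\<Sum>s = Suc 0..Suc k. q (e s) * (e s - a (s - 1)))"
      by (simp only: sum.shift_bounds_cl_Suc_ivl atMost_atLeast0 diff_Suc_1)
    then show ?thesis
      using assms(2) by simp
  qed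
  have left: "(\<Sum>s\<le>k. q (e s) * (e s - a s)) = (\<Sum>s = 1..k. q (e s) * (e s - a s))"
    using assms(1) by (simp add: atMost_atLeast0 sum.atLeast_Suc_atMost)
  have "(\<Sum>s = 1..k. q (e s) * (e s - a (s - 1)) - q (e s) * (e s - a s))
      = (\<Sum>s = 1..k. (a s - a (s - 1)) * q (e s))"
    by (rule sum.cong) (auto simp: algebra_simps)
  then show ?thesis
    by (simp only: sum_subtractf right left)
qed

lemma ext_alpha_less_Suc:
  assumes "\<And>s. 1 \<le> s \<Longrightarrow> s \<le> k \<Longrightarrow> -1 < \<alpha> s \<and> \<alpha> s < 1"
    and "\<And>s. 1 \<le> s \<Longrightarrow> s < k \<Longrightarrow> \<alpha> s < \<alpha> (Suc s)"
    and "j \<le> k"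
  shows "ext_alpha k \<alpha> j < ext_alpha k \<alpha> (Suc j)"
proof -
  consider "j = 0" | "j = k" "j \<noteq> 0" | "1 \<le> j" "j < k"
    using assms(3) by linarith
  then show ?thesis
  proof cases
    case 1
    then show ?thesis using assms(1)[of 1] by (auto simp: ext_alpha_def)
  next
    case 2
    then show ?thesis using assms(1)[of k] by (auto simp: ext_alpha_def)
  next
    case 3
    then show ?thesis using assms(2)[of j] by (auto simp: ext_alpha_def)
  qed
qed

lemma Pi_interp_eq_on_cell:
  assumes step: "\<And>j. j \<le> k \<Longrightarrow> ext_alpha k \<alpha> j < ext_alpha k \<alpha> (Suc j)"
    and s: "s \<le> k" and x: "ext_alpha k \<alpha> s < x" "x < ext_alpha k \<alpha> (Suc s)"
  shows "Pi_interp k \<alpha> a w x = w (a s)"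
proof -
  let ?e = "ext_alpha k \<alpha>"
  have mono: "?e i \<le> ?e j" if "i \<le> j" "j \<le> Suc k" for i j
    by (rule lift_Suc_mono_le_ivl[where N = "{..k}"]) (use step that in \<open>auto intro: less_imp_le\<close>)
  have cell_iff: "(?e j < x \<and> x < ?e (Suc j)) \<longleftrightarrow> j = s" if "j \<le> k" for j
  proof -
    have "\<not> (?e j < x \<and> x < ?e (Suc j))" if "j \<noteq> s"
    proof (cases "j < s")
      case True
      then show ?thesis using mono[of "Suc j" s] s x by auto
    next
      case False
      then show ?thesis using mono[of "Suc s" j] \<open>j \<le> k\<close> \<open>j \<noteq> s\<close> x by auto
    qed
    then show ?thesis using x by blast
  qed
  have "Pi_interp k \<alpha> a w x = (\<Sum>j\<le>k. if j = s then w (a s) else 0)"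
    unfolding Pi_interp_def by (rule sum.cong) (auto simp: cell_iff)
  then show ?thesis using s by simp
qed

lemma has_integral_pderiv_mult_residual:
  fixes h :: "real poly"
  assumes step: "\<And>j. j \<le> k \<Longrightarrow> ext_alpha k \<alpha> j < ext_alpha k \<alpha> (Suc j)"
    and a0: "a 0 = -1" and ak: "a k = 1"
  shows "((\<lambda>x. poly (pderiv h) x * (x - Pi_interp k \<alpha> a (\<lambda>x. x) x) + poly h x) has_integral
           (\<Sum>s = 1..k. (a s - a (s - 1)) * poly h (\<alpha> s))) {-1..1}"
proof -
  let ?e = "ext_alpha k \<alpha>"
  have e0: "?e 0 = a 0" and ek: "?e (Suc k) = a k"
    using a0 ak by (simp_all add: ext_alpha_def)
  have "((\<lambda>x. poly (pderiv h) x * (x - Pi_interp k \<alpha> a (\<lambda>x. x) x) + poly h x) has_integral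
      (\<Sum>s<Suc k. poly h (?e (Suc s)) * (?e (Suc s) - a s) - poly h (?e s) * (?e s - a s)))
      {?e 0..?e (Suc k)}"
    using step Pi_interp_eq_on_cell[OF step, of _ _ a "\<lambda>x. x"]
    by (intro has_integral_partition_sum has_integral_pderiv_mult_linear) (auto intro: less_imp_le)
  also have "(\<Sum>s<Suc k. poly h (?e (Suc s)) * (?e (Suc s) - a s) - poly h (?e s) * (?e s - a s))
      = (\<Sum>s = 1..k. (a s - a (s - 1)) * poly h (?e s))"
    unfolding lessThan_Suc_atMost using e0 ek by (rule sum_boundary_terms_telescope)
  also have "\<dots> = (\<Sum>s = 1..k. (a s - a (s - 1)) * poly h (\<alpha> s))"
    by (rule sum.cong) (auto simp: ext_alpha_def)
  finally show ?thesis
    using a0 ak e0 ek by simp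
qed

theorem mainTheorem2:
  fixes k r :: nat and \<alpha> a :: "nat \<Rightarrow> real"
  assumes k: "k \<ge> 1"
    and alpha_range: "\<And>s. 1 \<le> s \<Longrightarrow> s \<le> k \<Longrightarrow> -1 < \<alpha> s \<and> \<alpha> s < 1"
    and alpha_mono: "\<And>s. 1 \<le> s \<Longrightarrow> s < k \<Longrightarrow> \<alpha> s < \<alpha> (Suc s)"
    and a0: "a 0 = -1" and ak: "a k = 1"
    and a_mono: "\<And>s. s < k \<Longrightarrow> a s < a (Suc s)"
    and interlace: "\<And>s. 1 \<le> s \<Longrightarrow> s \<le> k \<Longrightarrow> a (s - 1) < \<alpha> s \<and> \<alpha> s < a s"
    and r_lo: "k - 1 \<le> r" and r_hi: "r \<le> 2 * k - 2"
    and orth: "orth_condition k r \<alpha> a"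
  shows "\<forall>g :: real poly. degree g \<le> r + 1 \<longrightarrow>
           integral {-1..1} (poly g) = (\<Sum>s = 1..k. (a s - a (s - 1)) * poly g (\<alpha> s))"
proof (intro allI impI)
  fix h :: "real poly"
  assume "degree h \<le> r + 1"
  then have "degree (pderiv h) \<le> r" by (simp add: degree_pderiv)
  moreover have "degree [:0, 1::real:] \<le> 1" by simp
  ultimately have "integral {-1..1}
      (\<lambda>x. poly (pderiv h) x * (poly [:0, 1:] x - Pi_interp k \<alpha> a (poly [:0, 1:]) x)) = 0"
    using orth unfolding orth_condition_def by blast
  moreover have "poly [:0, 1:] = (\<lambda>x::real. x)" by (simp add: fun_eq_iff)
  ultimately have residual_orth:
    "integral {-1..1} (\<lambda>x. poly (pderiv h) x * (x - Pi_interp k \<alpha> a (\<lambda>x. x) x)) = 0"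
    by simp
  have "(poly h has_integral integral {-1..1} (poly h)) {-1..1}"
    by (intro integrable_integral integrable_continuous_real continuous_intros)
  from has_integral_diff[OF
      has_integral_pderiv_mult_residual[where h = h, OF ext_alpha_less_Suc[of k \<alpha>, OF alpha_range alpha_mono] a0 ak] this]
  have "((\<lambda>x. poly (pderiv h) x * (x - Pi_interp k \<alpha> a (\<lambda>x. x) x)) has_integral
         (\<Sum>s = 1..k. (a s - a (s - 1)) * poly h (\<alpha> s)) - integral {-1..1} (poly h)) {-1..1}"
    by simp
  then show "integral {-1..1} (poly h) = (\<Sum>s = 1..k. (a s - a (s - 1)) * poly h (\<alpha> s))"
    using residual_orth by (simp add: integral_unique)
qed

end
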